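(* Let $D\subset\mathbb{C}^n$ be an indecomposable central hyperplane arrangement of degree $d$, the cone of $Z=Z_1\cup\dots\cup Z_d\subset\mathbb{P}^{n-1}$. Let $k$ be an integer and $I\subset\{1,\dots,d-1\}$ with $|I|=k-1$, and put $Z(I)=\bigcup_{i\in I}Z_i$. Assume $k\ge n$ and $Z(I)\cup Z_d$ is a divisor with normal crossings on $\mathbb{P}^{n-1}$. Then $\dim V(I)'=\binom{k-1}{n-1}$.
   Context: Choose coordinates with $Z_d=\{x_n=0\}$, $Y'=\mathbb{P}^{n-1}\setminus Z_d\cong\mathbb{C}^{n-1}$, let $g_i$ ($i<d$) be a degree-one polynomial defining $Z_i\cap Y'$, $\omega_i=dg_i/g_i$, and let $h^\alpha$ be a formal generator, where $\alpha=(\alpha_i)$ with $\alpha_i=1-\frac kd$ for $i\in I$ and $\alpha_i=-\frac kd$ for $i\in\{1,\dots,d-1\}\setminus I$. $V(I)'$ is the $\mathbb{C}$-vector space of (twisted) rational $(n-1)$-forms on $Y'$ spanned by $\omega_{i_1}\wedge\dots\wedge\omega_{i_{n-1}}h^\alpha$ with $\{i_1,\dots,i_{n-1}\}\subset I$. Indecomposable: no nontrivial decomposition $\mathbb{C}^n=W'\times W''$ with $D$ the union of pull-backs of arrangements on $W',W''$. *)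

theory Defs
  imports "HOL-Library.Function_Algebras" "Jordan_Normal_Form.Determinant"
begin

text \<open>Vectors of C^n are modelled as functions nat => complex vanishing outside {0..<n};
  a linear form on C^n is given by its coefficient function a (a j = coefficient of x_(j+1)).\<close>

definition cvec :: "nat \<Rightarrow> (nat \<Rightarrow> complex) set" where
  "cvec n = {x. \<forall>j\<ge>n. x j = 0}"

definition lform :: "nat \<Rightarrow> (nat \<Rightarrow> complex) \<Rightarrow> (nat \<Rightarrow> complex) \<Rightarrow> complex" where
  "lform n a x = (\<Sum>j<n. a j * x j)"

definition lin_indep_fam :: "nat \<Rightarrow> (nat \<Rightarrow> nat \<Rightarrow> complex) \<Rightarrow> nat set \<Rightarrow> bool" where
  "lin_indep_fam n f S \<longleftrightarrow>
     (\<forall>c. (\<forall>j<n. (\<Sum>i\<in>S. c i * f i j) = 0) \<longrightarrow> (\<forall>i\<in>S. c i = 0))"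

text \<open>A central hyperplane arrangement in C^n of degree d: d nonzero linear forms
  f 1, ..., f d defining pairwise distinct hyperplanes Z_i = ker f_i.\<close>
definition central_arrangement :: "nat \<Rightarrow> nat \<Rightarrow> (nat \<Rightarrow> nat \<Rightarrow> complex) \<Rightarrow> bool" where
  "central_arrangement n d f \<longleftrightarrow>
     (\<forall>i\<in>{1..d}. \<exists>j<n. f i j \<noteq> 0) \<and>
     (\<forall>i\<in>{1..d}. \<forall>i'\<in>{1..d}. i \<noteq> i' \<longrightarrow> \<not> (\<exists>c. \<forall>j<n. f i j = c * f i' j))"

definition csubspace :: "nat \<Rightarrow> (nat \<Rightarrow> complex) set \<Rightarrow> bool" where
  "csubspace n W \<longleftrightarrow> W \<subseteq> cvec n \<and> (\<lambda>_. 0) \<in> W \<and>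
     (\<forall>x\<in>W. \<forall>y\<in>W. (\<lambda>j. x j + y j) \<in> W) \<and> (\<forall>c. \<forall>x\<in>W. (\<lambda>j. c * x j) \<in> W)"

text \<open>Decomposable: C^n = W' x W'' nontrivially (both factors nonzero, direct sum) such that
  every hyperplane Z_i is the pull-back of a hyperplane of W' (i.e. contains W'') or of W''
  (i.e. contains W').\<close>
definition indecomposable :: "nat \<Rightarrow> nat \<Rightarrow> (nat \<Rightarrow> nat \<Rightarrow> complex) \<Rightarrow> bool" where
  "indecomposable n d f \<longleftrightarrow>
     \<not> (\<exists>W1 W2. csubspace n W1 \<and> csubspace n W2 \<and>
          W1 \<noteq> {\<lambda>_. 0} \<and> W2 \<noteq> {\<lambda>_. 0} \<and> W1 \<inter> W2 = {\<lambda>_. 0} \<and>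
          (\<forall>x\<in>cvec n. \<exists>u\<in>W1. \<exists>v\<in>W2. x = (\<lambda>j. u j + v j)) \<and>
          (\<forall>i\<in>{1..d}. (\<forall>w\<in>W2. lform n (f i) w = 0) \<or> (\<forall>w\<in>W1. lform n (f i) w = 0)))"

text \<open>The union of the hyperplanes ker f_i (i in S) in P^(n-1) is a divisor with normal
  crossings: at every point of P^(n-1) (a nonzero x in C^n) the defining forms of the
  hyperplanes through that point are linearly independent.\<close>
definition normal_crossings :: "nat \<Rightarrow> (nat \<Rightarrow> nat \<Rightarrow> complex) \<Rightarrow> nat set \<Rightarrow> bool" where
  "normal_crossings n f S \<longleftrightarrow>
     (\<forall>x\<in>cvec n. (\<exists>j<n. x j \<noteq> 0) \<longrightarrow> lin_indep_fam n f {i\<in>S. lform n (f i) x = 0})"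

text \<open>Affine chart Y' = P^(n-1) minus {x_n = 0}, identified with C^(n-1) via y |-> [y : 1];
  g_i is the degree-one polynomial f_i(y,1).\<close>
definition gpoly :: "nat \<Rightarrow> (nat \<Rightarrow> nat \<Rightarrow> complex) \<Rightarrow> nat \<Rightarrow> (nat \<Rightarrow> complex) \<Rightarrow> complex" where
  "gpoly n f i y = lform n (f i) (y((n - 1) := 1))"

definition Ucompl :: "nat \<Rightarrow> nat \<Rightarrow> (nat \<Rightarrow> nat \<Rightarrow> complex) \<Rightarrow> (nat \<Rightarrow> complex) set" where
  "Ucompl n d f = {y\<in>cvec (n - 1). \<forall>i\<in>{1..d - 1}. gpoly n f i y \<noteq> 0}"

text \<open>omega_i = dg_i/g_i = sum_c (f i c / g_i) dy_c.  The (n-1)-form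
  omega_(s 0) wedge ... wedge omega_(s (n-2)) on C^(n-1) is identified with its coefficient
  of dy_0 wedge ... wedge dy_(n-2), namely the determinant of the coefficient matrix; it is a
  rational function, represented by its values on the dense open set Ucompl.\<close>
definition wedge_omega :: "nat \<Rightarrow> nat \<Rightarrow> (nat \<Rightarrow> nat \<Rightarrow> complex) \<Rightarrow> (nat \<Rightarrow> nat)
    \<Rightarrow> (nat \<Rightarrow> complex) \<Rightarrow> complex" where
  "wedge_omega n d f s y =
     (if y \<in> Ucompl n d f
      then det (mat (n - 1) (n - 1) (\<lambda>(r, c). f (s r) c / gpoly n f (s r) y))
      else 0)"

definition fscale :: "complex \<Rightarrow> ((nat \<Rightarrow> complex) \<Rightarrow> complex) \<Rightarrow> ((nat \<Rightarrow> complex) \<Rightarrow> complex)" where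
  "fscale c F = (\<lambda>y. c * F y)"

text \<open>V(I)': the complex span of the forms omega_(i_1) wedge ... wedge omega_(i_(n-1)) h^alpha
  with {i_1,...,i_(n-1)} a subset of I (the formal generator h^alpha is a common factor
  and does not affect the linear structure, so it is omitted).\<close>
definition Vprime :: "nat \<Rightarrow> nat \<Rightarrow> (nat \<Rightarrow> nat \<Rightarrow> complex) \<Rightarrow> nat set
    \<Rightarrow> ((nat \<Rightarrow> complex) \<Rightarrow> complex) set" where
  "Vprime n d f I = module.span fscale
     {wedge_omega n d f s | s. \<forall>r<n - 1. s r \<in> I}"

end

theory Submission
  imports Defs "HOL-Computational_Algebra.Polynomial"
begin

text \<open>On the chart Y', the coefficient of dy_1 \<and> ... \<and> dy_(n-1) in
  omega_(i_1) \<and> ... \<and> omega_(i_(n-1)) is det (f_(i_r) c) / \<Prod>_r g_(i_r). It vanishes when two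
  indices coincide; otherwise the determinant is nonzero, because by normal crossings the
  hyperplanes Z_(i_1), ..., Z_(i_(n-1)), Z_d of C^n meet only in 0. So V(I)' is spanned by the
  functions 1 / \<Prod>_(i \<in> S) g_i with S \<subseteq> I, |S| = n - 1, and it remains to see that these
  are linearly independent. Clearing denominators turns a relation \<Sum>_S a_S / \<Prod>_(i \<in> S) g_i = 0
  into the polynomial identity \<Sum>_S a_S \<Prod>_(i \<in> I - S) g_i = 0 on the complement of the
  arrangement, hence everywhere. Evaluating it at a point lying on exactly the Z_i with i \<in> T
  (which exists, again by normal crossings) kills every term except the one for S = T, so
  a_T = 0.\<close>

lemma vector_space_fscale: "vector_space fscale"
  by unfold_locales (auto simp: fscale_def algebra_simps fun_eq_iff)

lemma lform_cvec_restrict: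
  assumes "x \<in> cvec m" "m \<le> n"
  shows "lform n a x = lform m a x"
  unfolding lform_def using assms
  by (intro sum.mono_neutral_right) (auto simp: cvec_def)

lemma lform_scale: "lform n a (\<lambda>j. c * x j) = c * lform n a x"
  by (simp add: lform_def sum_distrib_left algebra_simps)

lemma lform_last_unit:
  assumes "n \<ge> 1"
  shows "lform n (\<lambda>j. if j = n - 1 then 1 else 0) x = x (n - 1)"
  using assms by (cases n) (simp_all add: lform_def if_distrib cong: if_cong)

lemma det_mat_eq_0_iff_common_zero:
  "det (mat m m (\<lambda>(r, c). h r c)) = 0 \<longleftrightarrow>
     (\<exists>x\<in>cvec m. (\<exists>j<m. x j \<noteq> 0) \<and> (\<forall>r<m. lform m (h r) x = 0))"
proof -
  let ?A = "mat m m (\<lambda>(r, c). h r c)"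
  have kernel: "?A *\<^sub>v vec m x = 0\<^sub>v m \<longleftrightarrow> (\<forall>r<m. lform m (h r) x = 0)" for x
    by (auto simp: vec_eq_iff lform_def scalar_prod_def atLeast0LessThan)
  have nonzero: "vec m x \<noteq> 0\<^sub>v m \<longleftrightarrow> (\<exists>j<m. x j \<noteq> 0)" for x
    by (auto simp: vec_eq_iff)
  have "det ?A = 0 \<longleftrightarrow> (\<exists>v\<in>carrier_vec m. v \<noteq> 0\<^sub>v m \<and> ?A *\<^sub>v v = 0\<^sub>v m)"
    using det_0_iff_vec_prod_zero[of ?A m] by auto
  also have "\<dots> \<longleftrightarrow> (\<exists>x\<in>cvec m. vec m x \<noteq> 0\<^sub>v m \<and> ?A *\<^sub>v vec m x = 0\<^sub>v m)"
  proof
    assume "\<exists>v\<in>carrier_vec m. v \<noteq> 0\<^sub>v m \<and> ?A *\<^sub>v v = 0\<^sub>v m"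
    then obtain v where "v \<in> carrier_vec m" "v \<noteq> 0\<^sub>v m" "?A *\<^sub>v v = 0\<^sub>v m" by blast
    moreover have "vec m (\<lambda>j. if j < m then v $ j else 0) = v" if "v \<in> carrier_vec m"
      using that by (auto simp: vec_eq_iff)
    ultimately show "\<exists>x\<in>cvec m. vec m x \<noteq> 0\<^sub>v m \<and> ?A *\<^sub>v vec m x = 0\<^sub>v m"
      by (intro bexI[of _ "\<lambda>j. if j < m then v $ j else 0"]) (auto simp: cvec_def)
  qed auto
  finally show ?thesis unfolding kernel nonzero .
qed

lemma det_mat_zero_row:
  assumes "k < m" "h k = (\<lambda>_. 0)"
  shows "det (mat m m (\<lambda>(r, c). h r c)) = 0"
proof -
  have "(\<Prod>i=0..<m. mat m m (\<lambda>(r, c). h r c) $$ (i, p i)) = 0" if "p permutes {0..<m}" for p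
    using assms permutes_in_image[OF that, of k] by (intro prod_zero bexI[of _ k]) auto
  then show ?thesis by (simp add: det_def'[of _ m])
qed

lemma det_mat_scale_rows:
  "det (mat m m (\<lambda>(r, c). g r * h r c)) = (\<Prod>r<m. g r) * det (mat m m (\<lambda>(r, c). h r c))"
proof -
  have "det (mat m m (\<lambda>(r, c). g r * h r c)) =
      (\<Sum>p\<in>{p. p permutes {0..<m}}. signof p * (\<Prod>i=0..<m. g i * h i (p i)))"
    by (subst det_def'[of _ m]) (auto intro!: sum.cong prod.cong)
  also have "\<dots> = (\<Sum>p\<in>{p. p permutes {0..<m}}. (\<Prod>r<m. g r) * (signof p * (\<Prod>i=0..<m. h i (p i))))"
    by (intro sum.cong refl) (simp add: prod.distrib atLeast0LessThan)
  also have "\<dots> = (\<Prod>r<m. g r) * det (mat m m (\<lambda>(r, c). h r c))"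
    by (subst det_def'[of _ m]) (auto simp: sum_distrib_left intro!: sum.cong prod.cong)
  finally show ?thesis .
qed

lemma exists_common_zero:
  assumes "finite Z" "card Z < n"
  obtains x where "x \<in> cvec n" "\<exists>j<n. x j \<noteq> 0" "\<forall>i\<in>Z. lform n (f i) x = 0"
proof -
  obtain e where e: "bij_betw e {..<card Z} Z"
    using ex_bij_betw_nat_finite[OF assms(1)] by (auto simp: atLeast0LessThan)
  define h where "h r = (if r < card Z then f (e r) else (\<lambda>_. 0))" for r
  have "det (mat n n (\<lambda>(r, c). h r c)) = 0"
    using assms(2) by (intro det_mat_zero_row[of "n - 1"]) (auto simp: h_def)
  then obtain x where x: "x \<in> cvec n" "\<exists>j<n. x j \<noteq> 0" "\<forall>r<n. lform n (h r) x = 0"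
    unfolding det_mat_eq_0_iff_common_zero by blast
  have "\<forall>i\<in>Z. lform n (f i) x = 0"
  proof
    fix i assume "i \<in> Z"
    then obtain r where r: "r < card Z" "i = e r" using e by (auto simp: bij_betw_def)
    then have "h r = f i" by (simp add: h_def)
    then show "lform n (f i) x = 0" using x(3) r(1) assms(2) by (metis less_trans)
  qed
  with x that show thesis by blast
qed

lemma lin_indep_fam_common_zero:
  assumes ind: "lin_indep_fam n f Z" and "finite Z" "n \<le> card Z"
    and x: "x \<in> cvec n" "\<forall>i\<in>Z. lform n (f i) x = 0"
  shows "\<forall>j<n. x j = 0"
proof (rule ccontr)
  assume "\<not> (\<forall>j<n. x j = 0)"
  then have x_nonzero: "\<exists>j<n. x j \<noteq> 0" by auto
  obtain Z0 where Z0: "Z0 \<subseteq> Z" "card Z0 = n"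
    using obtain_subset_with_card_n[OF assms(3)] by blast
  then obtain e where e: "bij_betw e {..<n} Z0"
    using ex_bij_betw_nat_finite[of Z0] finite_subset[OF Z0(1) assms(2)]
    by (auto simp: atLeast0LessThan)
  have e_Z: "e r \<in> Z" if "r < n" for r
    using that e Z0(1) by (auto simp: bij_betw_def)
  have "\<forall>r<n. lform n (f (e r)) x = 0"
    using x(2) e_Z by blast
  then have "det (mat n n (\<lambda>(r, c). f (e r) c)) = 0"
    unfolding det_mat_eq_0_iff_common_zero using x(1) x_nonzero by (intro bexI[of _ x]) simp_all
  moreover have "transpose_mat (mat n n (\<lambda>(r, c). f (e r) c)) = mat n n (\<lambda>(r, c). f (e c) r)"
    by (auto intro: eq_matI)
  ultimately have "det (mat n n (\<lambda>(r, c). f (e c) r)) = 0"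
    using det_transpose[of "mat n n (\<lambda>(r, c). f (e r) c)" n] by simp
  then obtain w where w: "w \<in> cvec n" "\<exists>r<n. w r \<noteq> 0" "\<forall>j<n. lform n (\<lambda>r. f (e r) j) w = 0"
    unfolding det_mat_eq_0_iff_common_zero by blast
  define c where "c i = (if i \<in> Z0 then w (inv_into {..<n} e i) else 0)" for i
  have c_e: "c (e r) = w r" if "r < n" for r
    using that e by (auto simp: c_def bij_betw_def)
  have "(\<Sum>i\<in>Z. c i * f i j) = 0" if "j < n" for j
  proof -
    have "(\<Sum>i\<in>Z. c i * f i j) = (\<Sum>i\<in>Z0. c i * f i j)"
      using Z0(1) assms(2) by (intro sum.mono_neutral_right) (auto simp: c_def)
    also have "\<dots> = (\<Sum>r<n. c (e r) * f (e r) j)"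
      using sum.reindex_bij_betw[OF e, of "\<lambda>i. c i * f i j"] by simp
    also have "\<dots> = lform n (\<lambda>r. f (e r) j) w"
      by (simp add: lform_def c_e mult.commute)
    finally show ?thesis using w(3) that by simp
  qed
  then have c_zero: "\<forall>i\<in>Z. c i = 0"
    using ind unfolding lin_indep_fam_def by blast
  obtain r where "r < n" "w r \<noteq> 0"
    using w(2) by blast
  moreover have "c (e r) = 0"
    using c_zero e_Z[OF \<open>r < n\<close>] by blast
  ultimately show False
    using c_e by simp
qed

lemma normal_crossings_common_zero:
  assumes "normal_crossings n f J" "finite J" "Z \<subseteq> J" "n \<le> card Z"
    and "x \<in> cvec n" "\<forall>i\<in>Z. lform n (f i) x = 0"
  shows "\<forall>j<n. x j = 0"
proof (rule ccontr)
  let ?Zx = "{i\<in>J. lform n (f i) x = 0}"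
  assume "\<not> (\<forall>j<n. x j = 0)"
  then have indep: "lin_indep_fam n f ?Zx"
    using assms(1,5) unfolding normal_crossings_def by blast
  have "Z \<subseteq> ?Zx"
    using assms(3,6) by blast
  then have card: "n \<le> card ?Zx"
    using assms(2,4) card_mono[of ?Zx Z] by simp
  have "\<forall>j<n. x j = 0"
    by (rule lin_indep_fam_common_zero[OF indep _ card assms(5)]) (use assms(2) in auto)
  with \<open>\<not> (\<forall>j<n. x j = 0)\<close> show False ..
qed

lemma det_coeff_rows_nonzero:
  assumes nc: "normal_crossings n f (I \<union> {d})" and "finite I" "d \<notin> I"
    and fd: "f d = (\<lambda>j. if j = n - 1 then 1 else 0)" and nm: "n = Suc m"
    and s: "inj_on s {..<m}" "s ` {..<m} \<subseteq> I"
  shows "det (mat m m (\<lambda>(r, c). f (s r) c)) \<noteq> 0"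
proof
  assume "det (mat m m (\<lambda>(r, c). f (s r) c)) = 0"
  then obtain x where x: "x \<in> cvec m" "\<exists>j<m. x j \<noteq> 0" "\<forall>r<m. lform m (f (s r)) x = 0"
    unfolding det_mat_eq_0_iff_common_zero by blast
  have "x \<in> cvec n"
    using x(1) nm by (auto simp: cvec_def)
  have "lform n (f d) x = 0"
    using x(1) fd nm lform_last_unit[of n x] by (simp add: cvec_def)
  moreover have "lform n (f (s r)) x = 0" if "r < m" for r
    using x(3) that lform_cvec_restrict[OF x(1), of n] nm by simp
  ultimately have zero: "\<forall>i\<in>s ` {..<m} \<union> {d}. lform n (f i) x = 0"
    by blast
  have "d \<notin> s ` {..<m}"
    using s(2) assms(3) by blast
  then have "card (s ` {..<m} \<union> {d}) = n"
    using s(1) nm by (simp add: card_image)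
  then have "\<forall>j<n. x j = 0"
    using normal_crossings_common_zero[OF nc _ _ _ \<open>x \<in> cvec n\<close> zero] s(2) assms(2) by auto
  then show False
    using x(2) nm by auto
qed

lemma exists_point_on_exactly:
  assumes nc: "normal_crossings n f (I \<union> {d})" and "finite I" "d \<notin> I"
    and fd: "f d = (\<lambda>j. if j = n - 1 then 1 else 0)" and nm: "n = Suc m"
    and T: "T \<subseteq> I" "card T = m"
  obtains p where "p \<in> cvec m" "\<forall>i\<in>T. gpoly n f i p = 0" "\<forall>i\<in>I - T. gpoly n f i p \<noteq> 0"
proof -
  have "finite T"
    using T(1) assms(2) finite_subset by blast
  then obtain x where x: "x \<in> cvec n" "\<exists>j<n. x j \<noteq> 0" "\<forall>i\<in>T. lform n (f i) x = 0"
    using exists_common_zero[of T n f] T(2) nm by auto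
  \<comment> \<open>For i = d this says that [x] lies in the affine chart Y'.\<close>
  have other_nonzero: "lform n (f i) x \<noteq> 0" if i: "i \<in> (I - T) \<union> {d}" for i
  proof
    assume "lform n (f i) x = 0"
    then have zero: "\<forall>i'\<in>insert i T. lform n (f i') x = 0"
      using x(3) by blast
    have "i \<notin> T"
      using i T(1) assms(3) by blast
    then have "card (insert i T) = n"
      using T(2) \<open>finite T\<close> nm by simp
    then have "\<forall>j<n. x j = 0"
      using normal_crossings_common_zero[OF nc _ _ _ x(1) zero] i T(1) assms(2) by auto
    then show False
      using x(2) by auto
  qed
  have "x m = lform n (f d) x"
    using fd nm lform_last_unit[of n x] by simp
  then have xm: "x m \<noteq> 0"
    using other_nonzero by simp
  define p where "p c = (if c < m then x c / x m else 0)" for c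
  have "p(m := 1) = (\<lambda>j. inverse (x m) * x j)"
    using x(1) xm nm by (auto simp: p_def cvec_def fun_eq_iff field_simps)
  then have gpoly_p: "gpoly n f i p = inverse (x m) * lform n (f i) x" for i
    using nm by (simp add: gpoly_def lform_scale)
  show thesis
  proof
    show "p \<in> cvec m"
      by (simp add: p_def cvec_def)
    show "\<forall>i\<in>T. gpoly n f i p = 0"
      using x(3) gpoly_p by simp
    show "\<forall>i\<in>I - T. gpoly n f i p \<noteq> 0"
      using other_nonzero gpoly_p xm by simp
  qed
qed

lemma central_arrangement_coeff_nonzero:
  assumes "central_arrangement n d f" and fd: "f d = (\<lambda>j. if j = n - 1 then 1 else 0)"
    and i: "i \<in> {1..d - 1}" and nm: "n = Suc m"
  shows "\<exists>c<m. f i c \<noteq> 0"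
proof (rule ccontr)
  assume "\<not> (\<exists>c<m. f i c \<noteq> 0)"
  then have "\<forall>j<n. f i j = f i m * f d j"
    using nm fd by (auto simp: less_Suc_eq)
  moreover have "i \<noteq> d" "i \<in> {1..d}" "d \<in> {1..d}"
    using i by auto
  ultimately show False
    using assms(1) unfolding central_arrangement_def by blast
qed

text \<open>Along this curve every non-constant affine function restricts to a nonzero polynomial in t,
  since the monomials t^(c+1) are linearly independent.\<close>

definition moment_curve :: "nat \<Rightarrow> (nat \<Rightarrow> complex) \<Rightarrow> complex \<Rightarrow> nat \<Rightarrow> complex" where
  "moment_curve m p t = (\<lambda>c. if c < m then p c + t ^ Suc c else 0)"

lemma moment_curve_0: "p \<in> cvec m \<Longrightarrow> moment_curve m p 0 = p"
  by (auto simp: moment_curve_def cvec_def)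

lemma gpoly_moment_curve:
  assumes nm: "n = Suc m" and "\<exists>c<m. f i c \<noteq> 0"
  obtains Q where "Q \<noteq> 0" "\<And>t. gpoly n f i (moment_curve m p t) = poly Q t"
proof
  define Q where "Q = [:gpoly n f i p:] + (\<Sum>c<m. monom (f i c) (Suc c))"
  obtain c where "c < m" "f i c \<noteq> 0"
    using assms(2) by blast
  then have "coeff Q (Suc c) \<noteq> 0"
    by (simp add: Q_def coeff_sum coeff_pCons)
  then show "Q \<noteq> 0"
    by auto
  fix t
  have "gpoly n f i (moment_curve m p t) = (\<Sum>j<m. f i j * p j) + f i m + (\<Sum>j<m. f i j * t ^ Suc j)"
    using nm by (simp add: gpoly_def lform_def moment_curve_def algebra_simps sum.distrib)
  also have "\<dots> = poly Q t"
    using nm by (simp add: Q_def gpoly_def lform_def poly_sum poly_monom)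
  finally show "gpoly n f i (moment_curve m p t) = poly Q t" .
qed

lemma gpoly_combination_vanishes:
  assumes ca: "central_arrangement n d f" and fd: "f d = (\<lambda>j. if j = n - 1 then 1 else 0)"
    and nm: "n = Suc m" and "finite \<S>" and A: "\<And>S. S \<in> \<S> \<Longrightarrow> A S \<subseteq> {1..d - 1}"
    and vanish: "\<forall>y\<in>Ucompl n d f. (\<Sum>S\<in>\<S>. c S * (\<Prod>i\<in>A S. gpoly n f i y)) = 0"
    and p: "p \<in> cvec m"
  shows "(\<Sum>S\<in>\<S>. c S * (\<Prod>i\<in>A S. gpoly n f i p)) = 0"
proof -
  have "\<forall>i\<in>{1..d - 1}. \<exists>Q. Q \<noteq> 0 \<and> (\<forall>t. gpoly n f i (moment_curve m p t) = poly Q t)"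
    using gpoly_moment_curve[OF nm] central_arrangement_coeff_nonzero[OF ca fd _ nm] by metis
  then obtain Q where Q: "\<And>i. i \<in> {1..d - 1} \<Longrightarrow> Q i \<noteq> 0"
    and gpoly_Q: "\<And>i t. i \<in> {1..d - 1} \<Longrightarrow> gpoly n f i (moment_curve m p t) = poly (Q i) t"
    by metis
  define R where "R = (\<Union>i\<in>{1..d - 1}. {t. poly (Q i) t = 0})"
  have "finite R"
    unfolding R_def using Q poly_roots_finite by blast
  define H where "H = (\<Sum>S\<in>\<S>. smult (c S) (\<Prod>i\<in>A S. Q i))"
  have poly_H: "poly H t = (\<Sum>S\<in>\<S>. c S * (\<Prod>i\<in>A S. gpoly n f i (moment_curve m p t)))" for t
    unfolding H_def poly_sum poly_smult poly_prod
    by (intro sum.cong refl arg_cong2[where f = "(*)"] prod.cong) (metis A gpoly_Q subsetD)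
  have "moment_curve m p t \<in> Ucompl n d f" if "t \<notin> R" for t
    using that nm gpoly_Q by (auto simp: Ucompl_def cvec_def moment_curve_def R_def)
  then have "- R \<subseteq> {t. poly H t = 0}"
    using vanish poly_H by auto
  moreover have "infinite (- R)"
    using \<open>finite R\<close> infinite_UNIV_char_0 by (metis Compl_partition finite_Un)
  ultimately have "H = 0"
    using poly_roots_finite finite_subset by blast
  then show ?thesis
    using poly_H[of 0] moment_curve_0[OF p] by simp
qed

definition recip_gprod :: "nat \<Rightarrow> nat \<Rightarrow> (nat \<Rightarrow> nat \<Rightarrow> complex) \<Rightarrow> nat set \<Rightarrow> (nat \<Rightarrow> complex) \<Rightarrow> complex" where
  "recip_gprod n d f S y = (if y \<in> Ucompl n d f then 1 / (\<Prod>i\<in>S. gpoly n f i y) else 0)"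

lemma wedge_omega_eq_det_div_prod:
  assumes "y \<in> Ucompl n d f" "n = Suc m"
  shows "wedge_omega n d f s y = det (mat m m (\<lambda>(r, c). f (s r) c)) / (\<Prod>r<m. gpoly n f (s r) y)"
proof -
  have "wedge_omega n d f s y = det (mat m m (\<lambda>(r, c). inverse (gpoly n f (s r) y) * f (s r) c))"
    using assms by (simp add: wedge_omega_def divide_inverse mult.commute)
  also have "\<dots> = (\<Prod>r<m. inverse (gpoly n f (s r) y)) * det (mat m m (\<lambda>(r, c). f (s r) c))"
    by (rule det_mat_scale_rows)
  finally show ?thesis
    using prod_inversef[of "\<lambda>r. gpoly n f (s r) y" "{..<m}"]
    by (simp add: divide_inverse comp_def mult.commute)
qed

lemma wedge_omega_eq_fscale_recip_gprod:
  assumes "n = Suc m" "inj_on s {..<m}"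
  shows "wedge_omega n d f s = fscale (det (mat m m (\<lambda>(r, c). f (s r) c))) (recip_gprod n d f (s ` {..<m}))"
proof
  fix y
  have "(\<Prod>r<m. gpoly n f (s r) y) = (\<Prod>i\<in>s ` {..<m}. gpoly n f i y)"
    using prod.reindex[OF assms(2), of "\<lambda>i. gpoly n f i y"] by simp
  then show "wedge_omega n d f s y = fscale (det (mat m m (\<lambda>(r, c). f (s r) c))) (recip_gprod n d f (s ` {..<m})) y"
    using wedge_omega_eq_det_div_prod[OF _ assms(1)]
    by (simp add: fscale_def recip_gprod_def wedge_omega_def)
qed

lemma wedge_omega_eq_0_if_not_inj:
  assumes "n = Suc m" "\<not> inj_on s {..<m}"
  shows "wedge_omega n d f s = (\<lambda>_. 0)"
proof -
  obtain r1 r2 where "r1 < m" "r2 < m" "r1 \<noteq> r2" "s r1 = s r2"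
    using assms(2) by (auto simp: inj_on_def)
  then have "det (mat m m (\<lambda>(r, c). f (s r) c)) = 0"
    by (intro det_identical_rows[of _ m r1 r2]) auto
  then show ?thesis
    using wedge_omega_eq_det_div_prod[OF _ assms(1)] by (auto simp: wedge_omega_def)
qed

lemma recip_gprod_mult_prod:
  assumes y: "y \<in> Ucompl n d f" and "S \<subseteq> I" and I: "I \<subseteq> {1..d - 1}"
  shows "recip_gprod n d f S y * (\<Prod>i\<in>I. gpoly n f i y) = (\<Prod>i\<in>I - S. gpoly n f i y)"
proof -
  have "finite I"
    using I finite_subset by blast
  have "(\<Prod>i\<in>S. gpoly n f i y) \<noteq> 0"
    using y assms(2) I \<open>finite I\<close> finite_subset by (subst prod_zero_iff) (auto simp: Ucompl_def)
  moreover have "(\<Prod>i\<in>I. gpoly n f i y) = (\<Prod>i\<in>I - S. gpoly n f i y) * (\<Prod>i\<in>S. gpoly n f i y)"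
    using prod.subset_diff[OF assms(2) \<open>finite I\<close>] by simp
  ultimately show ?thesis
    using y by (simp add: recip_gprod_def)
qed

lemma recip_gprod_coeffs_zero:
  assumes nc: "normal_crossings n f (I \<union> {d})" and I: "I \<subseteq> {1..d - 1}"
    and ca: "central_arrangement n d f" and fd: "f d = (\<lambda>j. if j = n - 1 then 1 else 0)"
    and nm: "n = Suc m"
    and vanish: "\<forall>y. (\<Sum>S | S \<subseteq> I \<and> card S = m. a S * recip_gprod n d f S y) = 0"
    and T: "T \<subseteq> I" "card T = m"
  shows "a T = 0"
proof -
  let ?SS = "{S. S \<subseteq> I \<and> card S = m}"
  have "finite I"
    using I finite_subset by blast
  have "d \<notin> I"
    using I by fastforce
  obtain p where p: "p \<in> cvec m" "\<forall>i\<in>T. gpoly n f i p = 0" "\<forall>i\<in>I - T. gpoly n f i p \<noteq> 0"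
    using exists_point_on_exactly[OF nc \<open>finite I\<close> \<open>d \<notin> I\<close> fd nm T] by blast
  have "(\<Sum>S\<in>?SS. a S * (\<Prod>i\<in>I - S. gpoly n f i y)) = 0" if y: "y \<in> Ucompl n d f" for y
  proof -
    have "(\<Sum>S\<in>?SS. a S * (\<Prod>i\<in>I - S. gpoly n f i y))
        = (\<Sum>S\<in>?SS. a S * recip_gprod n d f S y) * (\<Prod>i\<in>I. gpoly n f i y)"
      unfolding sum_distrib_right
      by (intro sum.cong refl) (simp add: recip_gprod_mult_prod[OF y _ I] mult.assoc)
    then show ?thesis
      using vanish by simp
  qed
  then have "(\<Sum>S\<in>?SS. a S * (\<Prod>i\<in>I - S. gpoly n f i p)) = 0"
    using I \<open>finite I\<close> by (intro gpoly_combination_vanishes[OF ca fd nm _ _ _ p(1)]) auto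
  moreover have "(\<Sum>S\<in>?SS. a S * (\<Prod>i\<in>I - S. gpoly n f i p)) = (\<Sum>S\<in>{T}. a S * (\<Prod>i\<in>I - S. gpoly n f i p))"
  proof (rule sum.mono_neutral_right)
    show "finite ?SS" "{T} \<subseteq> ?SS"
      using \<open>finite I\<close> T by simp_all
    show "\<forall>S\<in>?SS - {T}. a S * (\<Prod>i\<in>I - S. gpoly n f i p) = 0"
    proof
      fix S assume S: "S \<in> ?SS - {T}"
      have "\<not> T \<subseteq> S"
        using S T \<open>finite I\<close> card_subset_eq[of S T] finite_subset by auto
      then obtain i where "i \<in> T" "i \<in> I - S"
        using T(1) by blast
      then show "a S * (\<Prod>i\<in>I - S. gpoly n f i p) = 0"
        using p(2) \<open>finite I\<close> by (auto intro: prod_zero)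
    qed
  qed
  moreover have "(\<Prod>i\<in>I - T. gpoly n f i p) \<noteq> 0"
    using p(3) \<open>finite I\<close> by (subst prod_zero_iff) auto
  ultimately show ?thesis
    by simp
qed

lemma sum_fun_apply: "(\<Sum>x\<in>A. g x :: 'a \<Rightarrow> 'b::comm_monoid_add) y = (\<Sum>x\<in>A. g x y)"
  by (induction A rule: infinite_finite_induct) simp_all

lemma fscale_independent_image:
  fixes \<phi> :: "'a \<Rightarrow> (nat \<Rightarrow> complex) \<Rightarrow> complex"
  assumes "finite X"
    and coeffs_zero: "\<And>a. \<forall>y. (\<Sum>x\<in>X. a x * \<phi> x y) = 0 \<Longrightarrow> \<forall>x\<in>X. a x = 0"
  shows "inj_on \<phi> X" "\<not> module.dependent fscale (\<phi> ` X)"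
proof -
  interpret vector_space fscale
    by (rule vector_space_fscale)
  show inj: "inj_on \<phi> X"
  proof
    fix x1 x2 assume x: "x1 \<in> X" "x2 \<in> X" "\<phi> x1 = \<phi> x2"
    define a where "a x = (if x = x1 then 1 else 0) - (if x = x2 then 1 else (0::complex))" for x
    have "(\<Sum>x\<in>X. a x * \<phi> x y) = \<phi> x1 y - \<phi> x2 y" for y
    proof -
      have "(\<Sum>x\<in>X. a x * \<phi> x y) = (\<Sum>x\<in>X. (if x = x1 then \<phi> x y else 0) - (if x = x2 then \<phi> x y else 0))"
        by (intro sum.cong refl) (simp add: a_def)
      also have "\<dots> = \<phi> x1 y - \<phi> x2 y"
        using x(1,2) \<open>finite X\<close> by (simp add: sum_subtractf)
      finally show ?thesis .
    qed
    then have "a x1 = 0"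
      using coeffs_zero[of a] x by simp
    then show "x1 = x2"
      by (simp add: a_def split: if_splits)
  qed
  show "independent (\<phi> ` X)"
    apply (rule independent_if_scalars_zero[OF finite_imageI[OF \<open>finite X\<close>]])
    subgoal premises prems for u v
    proof -
      from prems(2) obtain x where "x \<in> X" "v = \<phi> x"
        by blast
      have "(\<Sum>x\<in>X. u (\<phi> x) * \<phi> x y) = (\<Sum>w\<in>\<phi> ` X. fscale (u w) w) y" for y
        by (simp add: sum.reindex[OF inj] sum_fun_apply fscale_def)
      then have "u (\<phi> x) = 0"
        using coeffs_zero[of "\<lambda>x. u (\<phi> x)"] prems(1) \<open>x \<in> X\<close> by simp
      then show "u v = 0"
        using \<open>v = \<phi> x\<close> by simp
    qed
    done
qed

lemma wedge_omega_in_span_recip_gprod: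
  assumes nm: "n = Suc m" and s: "\<forall>r<m. s r \<in> I"
  shows "wedge_omega n d f s \<in> module.span fscale (recip_gprod n d f ` {S. S \<subseteq> I \<and> card S = m})"
proof -
  interpret vector_space fscale
    by (rule vector_space_fscale)
  show ?thesis
  proof (cases "inj_on s {..<m}")
    case True
    then have "recip_gprod n d f (s ` {..<m}) \<in> recip_gprod n d f ` {S. S \<subseteq> I \<and> card S = m}"
      using s by (auto simp: card_image)
    then show ?thesis
      unfolding wedge_omega_eq_fscale_recip_gprod[OF nm True] by (rule span_scale[OF span_base])
  next
    case False
    then show ?thesis
      unfolding wedge_omega_eq_0_if_not_inj[OF nm False] using span_zero by (simp add: zero_fun_def)
  qed
qed

lemma recip_gprod_in_span_wedge_omega:
  assumes nc: "normal_crossings n f (I \<union> {d})" and I: "I \<subseteq> {1..d - 1}"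
    and fd: "f d = (\<lambda>j. if j = n - 1 then 1 else 0)" and nm: "n = Suc m"
    and S: "S \<subseteq> I" "card S = m"
  shows "recip_gprod n d f S \<in> module.span fscale {wedge_omega n d f s | s. \<forall>r<n - 1. s r \<in> I}"
proof -
  interpret vector_space fscale
    by (rule vector_space_fscale)
  have "finite I"
    using I finite_subset by blast
  have "d \<notin> I"
    using I by fastforce
  obtain s where s: "bij_betw s {..<m} S"
    using ex_bij_betw_nat_finite[of S] S \<open>finite I\<close> finite_subset by (auto simp: atLeast0LessThan)
  then have s_inj: "inj_on s {..<m}" and s_img: "s ` {..<m} = S"
    by (auto simp: bij_betw_def)
  define D where "D = det (mat m m (\<lambda>(r, c). f (s r) c))"
  have "D \<noteq> 0"
    unfolding D_def using det_coeff_rows_nonzero[OF nc \<open>finite I\<close> \<open>d \<notin> I\<close> fd nm s_inj] s_img S by simp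
  then have recip_eq: "recip_gprod n d f S = fscale (1 / D) (wedge_omega n d f s)"
    using wedge_omega_eq_fscale_recip_gprod[OF nm s_inj] s_img by (simp add: fscale_def D_def)
  have "\<forall>r<n - 1. s r \<in> I"
    using s_img S(1) nm by auto
  then have "wedge_omega n d f s \<in> {wedge_omega n d f s | s. \<forall>r<n - 1. s r \<in> I}"
    by blast
  then show ?thesis
    unfolding recip_eq by (rule span_scale[OF span_base])
qed

lemma Vprime_eq_span_recip_gprod:
  assumes nc: "normal_crossings n f (I \<union> {d})" and I: "I \<subseteq> {1..d - 1}"
    and fd: "f d = (\<lambda>j. if j = n - 1 then 1 else 0)" and nm: "n = Suc m"
  shows "Vprime n d f I = module.span fscale (recip_gprod n d f ` {S. S \<subseteq> I \<and> card S = m})"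
proof -
  interpret vector_space fscale
    by (rule vector_space_fscale)
  have "{wedge_omega n d f s | s. \<forall>r<n - 1. s r \<in> I} \<subseteq> span (recip_gprod n d f ` {S. S \<subseteq> I \<and> card S = m})"
    using wedge_omega_in_span_recip_gprod[OF nm] nm by auto
  moreover have "recip_gprod n d f ` {S. S \<subseteq> I \<and> card S = m} \<subseteq> span {wedge_omega n d f s | s. \<forall>r<n - 1. s r \<in> I}"
    using recip_gprod_in_span_wedge_omega[OF nc I fd nm] by auto
  ultimately show ?thesis
    unfolding Vprime_def span_eq by blast
qed

theorem lemma4p8:
  fixes n d :: nat and f :: "nat \<Rightarrow> nat \<Rightarrow> complex" and k :: int and I :: "nat set"
  assumes "n \<ge> 1"
    and "central_arrangement n d f"
    and "indecomposable n d f"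
    and "d \<ge> 1"
    and "f d = (\<lambda>j. if j = n - 1 then 1 else 0)"
    and "I \<subseteq> {1..d - 1}"
    and "int (card I) = k - 1"
    and "k \<ge> int n"
    and "normal_crossings n f (I \<union> {d})"
  shows "vector_space.dim fscale (Vprime n d f I) = nat (k - 1) choose (n - 1)"
proof -
  interpret vector_space fscale
    by (rule vector_space_fscale)
  obtain m where nm: "n = Suc m"
    using assms(1) by (cases n) auto
  let ?SS = "{S. S \<subseteq> I \<and> card S = m}"
  have "finite I"
    using assms(6) finite_subset by blast
  then have "finite ?SS"
    by simp
  have "\<forall>T\<in>?SS. a T = 0" if "\<forall>y. (\<Sum>S\<in>?SS. a S * recip_gprod n d f S y) = 0" for a
    using recip_gprod_coeffs_zero[OF assms(9,6,2,5) nm that] by blast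
  note basis = fscale_independent_image[OF \<open>finite ?SS\<close> this]
  have "dim (Vprime n d f I) = card (recip_gprod n d f ` ?SS)"
    unfolding Vprime_eq_span_recip_gprod[OF assms(9,6,5) nm] using basis(2)
    by (rule dim_span_eq_card_independent)
  also have "\<dots> = card ?SS"
    using basis(1) by (rule card_image)
  also have "\<dots> = card I choose m"
    using n_subsets[OF \<open>finite I\<close>] by simp
  moreover have "card I = nat (k - 1)"
    using assms(7) by linarith
  ultimately show ?thesis
    using nm by simp
qed

end
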